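(* Let $a=a_0+a_1e_1+a_2e_2+a_3e_3$ and $b=b_0+b_1e_1+b_2e_2+b_3e_3$ be nonzero elements of $C\ell_2$ with $H_a=H_b=0$, and let $d\in C\ell_2$. Then the equation $axb=d$ (in the unknown $x\in C\ell_2$) is solvable if and only if $$\frac{aa'db'b}{16(a_0^2+a_3^2)(b_0^2+b_3^2)}=d,$$ and in that case the general solution is $$x=\frac{a'db'}{16(a_0^2+a_3^2)(b_0^2+b_3^2)}+y-\frac{a'aybb'}{16(a_0^2+a_3^2)(b_0^2+b_3^2)},\qquad y\in C\ell_2 \text{ arbitrary}.$$
   Context: $C\ell_2$ is the 4-dimensional real associative algebra with basis $1,e_1,e_2,e_3$ and multiplication $e_1^2=e_2^2=1$, $e_3^2=-1$, $e_1e_2=e_3=-e_2e_1$, $e_1e_3=e_2=-e_3e_1$, $e_3e_2=e_1=-e_2e_3$. For $a=a_0+a_1e_1+a_2e_2+a_3e_3$ ($a_i\in\mathbb{R}$): $a'=a_0+a_1e_1+a_2e_2-a_3e_3$ and $H_a=a_0^2-a_1^2-a_2^2+a_3^2$. *)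

theory Defs
  imports Complex_Main
begin

text \<open>The Clifford algebra Cl_2: elements a0 + a1 e1 + a2 e2 + a3 e3 with
  e1^2 = e2^2 = 1, e3^2 = -1, e1 e2 = e3 = - e2 e1, e1 e3 = e2 = - e3 e1,
  e3 e2 = e1 = - e2 e3.\<close>

datatype cl2 = Cl2 (c0: real) (c1: real) (c2: real) (c3: real)

instantiation cl2 :: "{zero, one, plus, minus, uminus, times}"
begin
definition zero_cl2 :: cl2 where "0 = Cl2 0 0 0 0"
definition one_cl2 :: cl2 where "1 = Cl2 1 0 0 0"
definition plus_cl2 :: "cl2 \<Rightarrow> cl2 \<Rightarrow> cl2" where
  "a + b = Cl2 (c0 a + c0 b) (c1 a + c1 b) (c2 a + c2 b) (c3 a + c3 b)"
definition minus_cl2 :: "cl2 \<Rightarrow> cl2 \<Rightarrow> cl2" where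
  "a - b = Cl2 (c0 a - c0 b) (c1 a - c1 b) (c2 a - c2 b) (c3 a - c3 b)"
definition uminus_cl2 :: "cl2 \<Rightarrow> cl2" where
  "- a = Cl2 (- c0 a) (- c1 a) (- c2 a) (- c3 a)"
definition times_cl2 :: "cl2 \<Rightarrow> cl2 \<Rightarrow> cl2" where
  "a * b = Cl2
     (c0 a * c0 b + c1 a * c1 b + c2 a * c2 b - c3 a * c3 b)
     (c0 a * c1 b + c1 a * c0 b + c3 a * c2 b - c2 a * c3 b)
     (c0 a * c2 b + c2 a * c0 b + c1 a * c3 b - c3 a * c1 b)
     (c0 a * c3 b + c3 a * c0 b + c1 a * c2 b - c2 a * c1 b)"
instance ..
end

definition cl2_scale :: "real \<Rightarrow> cl2 \<Rightarrow> cl2" where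
  "cl2_scale r a = Cl2 (r * c0 a) (r * c1 a) (r * c2 a) (r * c3 a)"

definition cl2_prime :: "cl2 \<Rightarrow> cl2" where
  "cl2_prime a = Cl2 (c0 a) (c1 a) (c2 a) (- c3 a)"

definition cl2_H :: "cl2 \<Rightarrow> real" where
  "cl2_H a = (c0 a)^2 - (c1 a)^2 - (c2 a)^2 + (c3 a)^2"

end

theory Submission
  imports Defs
begin

text \<open>When \<open>H\<^sub>a = 0\<close> one computes \<open>a a' a = 4 (a\<^sub>0\<^sup>2 + a\<^sub>3\<^sup>2) a\<close>, and \<open>a\<^sub>0\<^sup>2 + a\<^sub>3\<^sup>2 > 0\<close> for
  \<open>a \<noteq> 0\<close>. Hence \<open>a\<^sup>- = a' / (4 (a\<^sub>0\<^sup>2 + a\<^sub>3\<^sup>2))\<close> is an inner inverse of \<open>a\<close>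
  (\<open>a a\<^sup>- a = a\<close>), and the theorem is Penrose's criterion in an arbitrary ring:
  \<open>a x b = d\<close> is solvable iff \<open>a a\<^sup>- d b\<^sup>- b = d\<close>, with general solution
  \<open>a\<^sup>- d b\<^sup>- + y - a\<^sup>- a y b b\<^sup>-\<close>.\<close>

lemma inner_inverse_equation_solvable_iff:
  fixes a u b v d :: "'a::ring"
  assumes a: "a * u * a = a" and b: "b * v * b = b"
  shows "(\<exists>x. a * x * b = d) \<longleftrightarrow> a * u * d * v * b = d"
proof
  assume "\<exists>x. a * x * b = d"
  then obtain x where "a * x * b = d" by blast
  then show "a * u * d * v * b = d"
    by (metis a b mult.assoc)
next
  assume "a * u * d * v * b = d"
  then have "a * (u * d * v) * b = d" by (simp add: mult.assoc)
  then show "\<exists>x. a * x * b = d" by blast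
qed

lemma inner_inverse_equation_solutions:
  fixes a u b v d :: "'a::ring"
  assumes a: "a * u * a = a" and b: "b * v * b = b"
    and solvable: "a * u * d * v * b = d"
  shows "{x. a * x * b = d} = {u * d * v + y - u * a * y * b * v | y. True}"
proof (intro equalityI subsetI)
  fix x assume "x \<in> {x. a * x * b = d}"
  then have "x = u * d * v + x - u * a * x * b * v"
    by (simp add: mult.assoc)
  then show "x \<in> {u * d * v + y - u * a * y * b * v | y. True}" by blast
next
  fix x assume "x \<in> {u * d * v + y - u * a * y * b * v | y. True}"
  then obtain y where x: "x = u * d * v + y - u * a * y * b * v" by blast
  have "a * (u * a * y * b * v) * b = (a * u * a) * y * (b * v * b)"
    by (simp add: mult.assoc)
  then have "a * (u * a * y * b * v) * b = a * y * b"
    by (simp add: a b)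
  then have "a * x * b = a * u * d * v * b"
    by (simp add: x algebra_simps)
  then show "x \<in> {x. a * x * b = d}" by (simp add: solvable)
qed

lemma cl2_eqI:
  "c0 x = c0 y \<Longrightarrow> c1 x = c1 y \<Longrightarrow> c2 x = c2 y \<Longrightarrow> c3 x = c3 y \<Longrightarrow> x = y"
  by (cases x; cases y) auto

instantiation cl2 :: real_algebra_1
begin

definition scaleR_cl2 :: "real \<Rightarrow> cl2 \<Rightarrow> cl2" where
  "scaleR_cl2 = cl2_scale"

instance
  by standard (auto intro!: cl2_eqI simp: zero_cl2_def one_cl2_def plus_cl2_def minus_cl2_def
      uminus_cl2_def times_cl2_def scaleR_cl2_def cl2_scale_def algebra_simps)

end

lemma cl2_scale_eq_scaleR: "cl2_scale r x = r *\<^sub>R x"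
  by (simp add: scaleR_cl2_def)

lemma cl2_mult_prime_mult:
  assumes "cl2_H a = 0"
  shows "a * cl2_prime a * a = (4 * ((c0 a)^2 + (c3 a)^2)) *\<^sub>R a"
proof -
  obtain p q r t where a: "a = Cl2 p q r t" by (cases a)
  from assms have H: "p^2 - q^2 - r^2 + t^2 = 0" by (simp add: a cl2_H_def)
  show ?thesis
    using H unfolding a
    by (intro cl2_eqI; simp add: times_cl2_def cl2_prime_def scaleR_cl2_def cl2_scale_def; algebra)
qed

lemma cl2_H_zero_norm_pos:
  assumes "a \<noteq> 0" and "cl2_H a = 0"
  shows "(c0 a)^2 + (c3 a)^2 > 0"
  unfolding sum_power2_gt_zero_iff
proof (rule ccontr)
  assume "\<not> (c0 a \<noteq> 0 \<or> c3 a \<noteq> 0)"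
  then have "c0 a = 0" "c3 a = 0" by simp_all
  have "(c1 a)^2 + (c2 a)^2 = (c0 a)^2 + (c3 a)^2"
    using \<open>cl2_H a = 0\<close> unfolding cl2_H_def by linarith
  then have "c1 a = 0" "c2 a = 0"
    using \<open>c0 a = 0\<close> \<open>c3 a = 0\<close> by (simp_all add: sum_power2_eq_zero_iff)
  with \<open>c0 a = 0\<close> \<open>c3 a = 0\<close> \<open>a \<noteq> 0\<close> show False
    by (cases a) (simp add: zero_cl2_def)
qed

definition cl2_inner_inverse :: "cl2 \<Rightarrow> cl2" where
  "cl2_inner_inverse a = (1 / (4 * ((c0 a)^2 + (c3 a)^2))) *\<^sub>R cl2_prime a"

lemma cl2_mult_inner_inverse_mult:
  assumes "a \<noteq> 0" and "cl2_H a = 0"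
  shows "a * cl2_inner_inverse a * a = a"
  using cl2_H_zero_norm_pos[OF assms] cl2_mult_prime_mult[OF assms(2)]
  by (simp add: cl2_inner_inverse_def)

theorem theorem4p1:
  fixes a b d :: cl2
  assumes "a \<noteq> 0" and "b \<noteq> 0" and "cl2_H a = 0" and "cl2_H b = 0"
  defines "N \<equiv> 16 * ((c0 a)^2 + (c3 a)^2) * ((c0 b)^2 + (c3 b)^2)"
  shows "((\<exists>x. a * x * b = d) \<longleftrightarrow>
            cl2_scale (1 / N) (a * cl2_prime a * d * cl2_prime b * b) = d)
       \<and> (cl2_scale (1 / N) (a * cl2_prime a * d * cl2_prime b * b) = d \<longrightarrow>
            {x. a * x * b = d} =
            {cl2_scale (1 / N) (cl2_prime a * d * cl2_prime b) + y
               - cl2_scale (1 / N) (cl2_prime a * a * y * b * cl2_prime b) | y. True})"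
proof -
  let ?a' = "cl2_inner_inverse a" and ?b' = "cl2_inner_inverse b"
  have a: "a * ?a' * a = a" and b: "b * ?b' * b = b"
    using assms(1-4) by (simp_all add: cl2_mult_inner_inverse_mult)
  have N: "1 / N = 1 / (4 * ((c0 a)^2 + (c3 a)^2)) * (1 / (4 * ((c0 b)^2 + (c3 b)^2)))"
    by (simp add: N_def algebra_simps)
  have "cl2_scale (1 / N) (a * cl2_prime a * d * cl2_prime b * b) = a * ?a' * d * ?b' * b"
    and "cl2_scale (1 / N) (cl2_prime a * d * cl2_prime b) = ?a' * d * ?b'"
    and "cl2_scale (1 / N) (cl2_prime a * a * y * b * cl2_prime b) = ?a' * a * y * b * ?b'" for y
    by (simp_all add: cl2_scale_eq_scaleR cl2_inner_inverse_def N)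
  then show ?thesis
    using inner_inverse_equation_solvable_iff[OF a b] inner_inverse_equation_solutions[OF a b]
    by simp
qed

end
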